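(* Let $r\ge 2$, $n=2r$, $k=r$, $I=\{1,3,\dots,2r-1\}$, $J=\{2,4,\dots,2r\}$, and let $b_1,\dots,b_{2r}\in\mathbb{C}[[t]]$ with $\sum_{i=1}^{2r}b_i=0$. Let $X'$ be a subset of $\{0,2,4,\dots,2r-2\}$ with $1\le|X'|<r$, and let $X,Y$ be the $r$-subsets of $\{1,\dots,2r\}$ associated with $X'$ as in the context. Suppose that for every $j=0,1,\dots,r-1$ (with the even number $2r$ identified with $0$): $t\mid b_{2j+1}+b_{2j+2}$ if $2j$ and $2j+2$ are either both in $X'$ or both not in $X'$, and $t\nmid b_{2j+1}+b_{2j+2}$ if exactly one of $2j,2j+2$ lies in $X'$. Suppose further that $t\mid b_{p}+b_{p+1}+b_{q}+b_{q+1}$ whenever $p,q$ are two consecutive (in cyclic order) elements of the set of odd indices $i\in\{1,3,\dots,2r-1\}$ with $t\nmid b_i+b_{i+1}$. Then the module $\mathbb{M}(I,J)$ is isomorphic to $L_X\oplus L_Y$.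
   Context: $\Gamma_n$ is the quiver with vertices $1,\dots,n$ on a cycle (vertex $0$ identified with $n$), arrows $x_i\colon i-1\to i$, $y_i\colon i\to i-1$. $B_{k,n}$ is its completed path algebra modulo the closure of the ideal generated by $xy=yx$ and $x^k=y^{n-k}$ at every vertex; its centre is $\mathbb{C}[[t]]$, $t=\sum_ix_iy_i$. For a $k$-subset $S$ of $\{1,\dots,n\}$, the rank $1$ module $L_S$ has $\mathbb{C}[[t]]$ at every vertex, $x_i$ acting as multiplication by $1$ and $y_i$ by $t$ if $i\in S$, and $x_i$ by $t$ and $y_i$ by $1$ if $i\notin S$. Here $\mathbb{M}(I,J)$ is the module with $V_i=\mathbb{C}[[t]]^2$ at every vertex, $x_i=\begin{pmatrix}t&b_i\\0&1\end{pmatrix}$, $y_i=\begin{pmatrix}1&-b_i\\0&t\end{pmatrix}$ for odd $i$, and $x_i=\begin{pmatrix}1&b_i\\0&t\end{pmatrix}$, $y_i=\begin{pmatrix}t&-b_i\\0&1\end{pmatrix}$ for even $i$. The elements of $\{0,2,\dots,2r-2\}$ are the peaks of the rim $I$. Given $X'$, define $X\subset\{1,\dots,2r\}$ as follows: for each $j=0,\dots,r-1$ (with $2r\equiv 0$ for membership in $X'$): if $2j\in X'$ and $2j+2\in X'$, then $2j+1\in X$, $2j+2\notin X$; if $2j\notin X'$ and $2j+2\in X'$, then $2j+1,2j+2\notin X$; if $2j\in X'$ and $2j+2\notin X'$, then $2j+1,2j+2\in X$; if $2j\notin X'$ and $2j+2\notin X'$, then $2j+1\notin X$, $2j+2\in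 X$. Set $Y=\{1,\dots,2r\}\setminus X$ (equivalently, $Y$ is obtained by the same rule from the complement $Y'$ of $X'$ in the set of peaks). *)

theory Defs
  imports "HOL-Computational_Algebra.Formal_Power_Series" "Jordan_Normal_Form.Matrix"
begin

text \<open>Coefficient ring C[[t]] is \<open>complex fps\<close>, with t = fps_X.
  A rank-2 module over B_{k,n} (free over C[[t]] at every vertex of Gamma_n) is
  given by the 2x2 matrices of the arrows: xa i : V_{i-1} -> V_i and
  ya i : V_i -> V_{i-1}, for i = 1..n, where vertex 0 is vertex n.\<close>

type_synonym rep2 = "(nat \<Rightarrow> complex fps mat) \<times> (nat \<Rightarrow> complex fps mat)"

definition prev_vertex :: "nat \<Rightarrow> nat \<Rightarrow> nat" where
  "prev_vertex n i = (if i = 1 then n else i - 1)"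

definition rep2_iso :: "nat \<Rightarrow> rep2 \<Rightarrow> rep2 \<Rightarrow> bool" where
  "rep2_iso n M N \<longleftrightarrow>
     (\<exists>\<phi> :: nat \<Rightarrow> complex fps mat.
        (\<forall>i\<in>{1..n}. \<phi> i \<in> carrier_mat 2 2 \<and> invertible_mat (\<phi> i)) \<and>
        (\<forall>i\<in>{1..n}. \<phi> i * fst M i = fst N i * \<phi> (prev_vertex n i)) \<and>
        (\<forall>i\<in>{1..n}. \<phi> (prev_vertex n i) * snd M i = snd N i * \<phi> i))"

definition mat2 :: "'a \<Rightarrow> 'a \<Rightarrow> 'a \<Rightarrow> 'a \<Rightarrow> 'a mat" where
  "mat2 a b c d = mat_of_rows_list 2 [[a, b], [c, d]]"

definition MIJ :: "(nat \<Rightarrow> complex fps) \<Rightarrow> rep2" where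
  "MIJ b =
    ((\<lambda>i. if odd i then mat2 fps_X (b i) 0 1 else mat2 1 (b i) 0 fps_X),
     (\<lambda>i. if odd i then mat2 1 (- b i) 0 fps_X else mat2 fps_X (- b i) 0 1))"

definition LS_x :: "nat set \<Rightarrow> nat \<Rightarrow> complex fps" where
  "LS_x S i = (if i \<in> S then 1 else fps_X)"
definition LS_y :: "nat set \<Rightarrow> nat \<Rightarrow> complex fps" where
  "LS_y S i = (if i \<in> S then fps_X else 1)"

definition Lsum :: "nat set \<Rightarrow> nat set \<Rightarrow> rep2" where
  "Lsum S T =
    ((\<lambda>i. mat2 (LS_x S i) 0 0 (LS_x T i)),
     (\<lambda>i. mat2 (LS_y S i) 0 0 (LS_y T i)))"

definition peak_in :: "nat \<Rightarrow> nat set \<Rightarrow> nat \<Rightarrow> bool" where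
  "peak_in r X' j \<longleftrightarrow> (2 * j) mod (2 * r) \<in> X'"

definition assocX :: "nat \<Rightarrow> nat set \<Rightarrow> nat set" where
  "assocX r X' = {i \<in> {1..2*r}. \<exists>j<r.
      (i = 2*j+1 \<and> ((peak_in r X' j \<and> peak_in r X' (j+1)) \<or>
                    (peak_in r X' j \<and> \<not> peak_in r X' (j+1)))) \<or>
      (i = 2*j+2 \<and> ((peak_in r X' j \<and> \<not> peak_in r X' (j+1)) \<or>
                    (\<not> peak_in r X' j \<and> \<not> peak_in r X' (j+1))))}"

definition assocY :: "nat \<Rightarrow> nat set \<Rightarrow> nat set" where
  "assocY r X' = {1..2*r} - assocX r X'"

definition cyc_consecutive :: "nat set \<Rightarrow> nat \<Rightarrow> nat \<Rightarrow> bool" where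
  "cyc_consecutive Os p q \<longleftrightarrow> p \<in> Os \<and> q \<in> Os \<and> p \<noteq> q \<and>
     (if p < q then \<not> (\<exists>m\<in>Os. p < m \<and> m < q)
      else \<not> (\<exists>m\<in>Os. p < m \<or> m < q))"

end

theory Submission
  imports Defs
begin

text \<open>Put \<open>\<beta> i = b 1 + \<dots> + b i - \<mu>\<close>. The hypotheses say that the constant terms of the pair
  sums \<open>b (2j+1) + b (2j+2)\<close> vanish except where membership of the peaks in \<open>X'\<close> switches, and
  that consecutive switches, which go in opposite directions, carry opposite weights. Hence, for a
  suitable \<open>\<mu>\<close>, the constant term of \<open>\<beta> (2j)\<close> is \<open>0\<close> if \<open>2j \<in> X'\<close> and a fixed \<open>u \<noteq> 0\<close> otherwise.
  This is exactly what makes the divisions by \<open>t\<close> in \<open>even_frame\<close> exact. The frames \<open>P i\<close> built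
  from \<open>\<beta> i\<close> then have determinant \<open>u\<close> and carry the arrows of \<open>M(I,J)\<close> to the diagonal
  arrows of \<open>L\<^sub>X \<oplus> L\<^sub>Y\<close>, so their inverses form the isomorphism.\<close>

lemma fps_X_dvd_iff: "(fps_X :: 'a::field fps) dvd f \<longleftrightarrow> fps_nth f 0 = 0"
proof (cases "f = 0")
  case False
  then show ?thesis
    using subdegree_eq_0_iff[of f] by (auto simp: fps_dvd_iff)
qed simp

lemma sum_in_pairs:
  fixes f :: "nat \<Rightarrow> 'a::comm_monoid_add"
  shows "(\<Sum>i=1..2*n. f i) = (\<Sum>j<n. f (2*j+1) + f (2*j+2))"
  by (induction n) (simp_all add: algebra_simps)

lemma mat2_dim [simp]: "dim_row (mat2 a b c d) = 2" "dim_col (mat2 a b c d) = 2"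
  by (simp_all add: mat2_def mat_of_rows_list_def)

lemma mat2_carrier [simp]: "mat2 a b c d \<in> carrier_mat 2 2"
  by (rule carrier_matI) simp_all

lemma mat2_index [simp]:
  "mat2 a b c d $$ (0, 0) = a" "mat2 a b c d $$ (0, 1) = b"
  "mat2 a b c d $$ (1, 0) = c" "mat2 a b c d $$ (1, 1) = d"
  "mat2 a b c d $$ (0, Suc 0) = b" "mat2 a b c d $$ (Suc 0, 0) = c"
  "mat2 a b c d $$ (Suc 0, Suc 0) = d"
  by (simp_all add: mat2_def mat_of_rows_list_def)

lemma mat2_eqI:
  assumes "A \<in> carrier_mat 2 2"
    and "A $$ (0, 0) = a" "A $$ (0, 1) = b" "A $$ (1, 0) = c" "A $$ (1, 1) = d"
  shows "A = mat2 a b c d"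
proof (rule eq_matI)
  fix i j assume "i < dim_row (mat2 a b c d)" "j < dim_col (mat2 a b c d)"
  then have "i = 0 \<or> i = 1" "j = 0 \<or> j = 1"
    by (simp_all add: less_2_cases_iff)
  then show "A $$ (i, j) = mat2 a b c d $$ (i, j)"
    using assms by auto
qed (use assms in auto)

lemma mat2_eq_iff: "mat2 a b c d = mat2 a' b' c' d' \<longleftrightarrow> a = a' \<and> b = b' \<and> c = c' \<and> d = d'"
  by (metis mat2_index(1-4))

lemma mat2_mult:
  fixes a b c d e f g h :: "'a::comm_ring_1"
  shows "mat2 a b c d * mat2 e f g h = mat2 (a*e + b*g) (a*f + b*h) (c*e + d*g) (c*f + d*h)"
  by (rule mat2_eqI) (auto simp: scalar_prod_def row_def col_def numeral_2_eq_2)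

lemma mat2_one: "1\<^sub>m 2 = (mat2 1 0 0 1 :: 'a::comm_ring_1 mat)"
  by (rule mat2_eqI) auto

definition scaled_adjugate :: "'a::comm_ring_1 \<Rightarrow> 'a mat \<Rightarrow> 'a mat" where
  "scaled_adjugate k A =
     mat2 (k * A $$ (1, 1)) (- (k * A $$ (0, 1))) (- (k * A $$ (1, 0))) (k * A $$ (0, 0))"

lemma scaled_adjugate_mat2_inverse:
  fixes a b c d k :: "'a::comm_ring_1"
  assumes "k * (a * d - b * c) = 1"
  shows "mat2 a b c d * scaled_adjugate k (mat2 a b c d) = 1\<^sub>m 2"
    and "scaled_adjugate k (mat2 a b c d) * mat2 a b c d = 1\<^sub>m 2"
proof -
  have "k * a * d - k * b * c = 1"
    using assms by (simp add: algebra_simps)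
  then show "mat2 a b c d * scaled_adjugate k (mat2 a b c d) = 1\<^sub>m 2"
    and "scaled_adjugate k (mat2 a b c d) * mat2 a b c d = 1\<^sub>m 2"
    by (simp_all add: scaled_adjugate_def mat2_one mat2_mult mat2_eq_iff algebra_simps)
qed

lemma mat_intertwiner_inverse:
  fixes x P Q P' Q' D :: "'a::semiring_1 mat"
  assumes carrier: "x \<in> carrier_mat n n" "P \<in> carrier_mat n n" "Q \<in> carrier_mat n n"
      "P' \<in> carrier_mat n n" "Q' \<in> carrier_mat n n" "D \<in> carrier_mat n n"
    and inverse: "P * Q = 1\<^sub>m n" "Q' * P' = 1\<^sub>m n"
    and intertwine: "x * P = P' * D"
  shows "Q' * x = D * Q"
proof -
  have "Q' * x = Q' * x * (P * Q)"
    using inverse right_mult_one_mat[OF mult_carrier_mat[OF carrier(5,1)]] by simp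
  also have "\<dots> = Q' * (x * P) * Q"
    using carrier by (simp add: assoc_mult_mat[of _ n n _ n _ n])
  also have "\<dots> = Q' * P' * D * Q"
    using carrier by (simp add: intertwine assoc_mult_mat[of _ n n _ n _ n])
  also have "\<dots> = D * Q"
    using carrier inverse by simp
  finally show ?thesis .
qed

lemma rep2_isoI_inverse_frames:
  fixes M N :: rep2 and P Q :: "nat \<Rightarrow> complex fps mat"
  assumes carrier: "\<And>i. i \<in> {1..n} \<Longrightarrow>
      P i \<in> carrier_mat 2 2 \<and> Q i \<in> carrier_mat 2 2 \<and>
      fst M i \<in> carrier_mat 2 2 \<and> snd M i \<in> carrier_mat 2 2 \<and>
      fst N i \<in> carrier_mat 2 2 \<and> snd N i \<in> carrier_mat 2 2"
    and inverse: "\<And>i. i \<in> {1..n} \<Longrightarrow> P i * Q i = 1\<^sub>m 2 \<and> Q i * P i = 1\<^sub>m 2"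
    and intertwine_x: "\<And>i. i \<in> {1..n} \<Longrightarrow> fst M i * P (prev_vertex n i) = P i * fst N i"
    and intertwine_y: "\<And>i. i \<in> {1..n} \<Longrightarrow> snd M i * P i = P (prev_vertex n i) * snd N i"
  shows "rep2_iso n M N"
  unfolding rep2_iso_def
proof (intro exI[of _ Q] conjI ballI)
  fix i assume i: "i \<in> {1..n}"
  then have prev: "prev_vertex n i \<in> {1..n}"
    by (auto simp: prev_vertex_def)
  show "Q i \<in> carrier_mat 2 2"
    using carrier[OF i] by blast
  have "dim_row (Q i) = 2" "dim_col (Q i) = 2" "dim_row (P i) = 2"
    using carrier[OF i] by auto
  then show "invertible_mat (Q i)"
    using inverse[OF i] unfolding invertible_mat_def inverts_mat_def by auto
  have P: "P i \<in> carrier_mat 2 2" "P (prev_vertex n i) \<in> carrier_mat 2 2"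
    and Q: "Q i \<in> carrier_mat 2 2" "Q (prev_vertex n i) \<in> carrier_mat 2 2"
    and M: "fst M i \<in> carrier_mat 2 2" "snd M i \<in> carrier_mat 2 2"
    and N: "fst N i \<in> carrier_mat 2 2" "snd N i \<in> carrier_mat 2 2"
    using carrier[OF i] carrier[OF prev] by simp_all
  show "Q i * fst M i = fst N i * Q (prev_vertex n i)"
    using mat_intertwiner_inverse[OF M(1) P(2) Q(2) P(1) Q(1) N(1)] inverse[OF i] inverse[OF prev]
      intertwine_x[OF i] by simp
  show "Q (prev_vertex n i) * snd M i = snd N i * Q i"
    using mat_intertwiner_inverse[OF M(2) P(1) Q(1) P(2) Q(2) N(2)] inverse[OF i] inverse[OF prev]
      intertwine_y[OF i] by simp
qed

lemma switch_free_run: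
  assumes "p < q" and "\<And>m. p < m \<Longrightarrow> m < q \<Longrightarrow> \<chi> m = \<chi> (Suc m)"
  shows "\<chi> q = \<chi> (Suc p)"
  using assms by (induction q) (auto simp: less_Suc_eq)

lemma partial_sums_of_switch_weights:
  fixes \<chi> :: "nat \<Rightarrow> bool" and s :: "nat \<Rightarrow> 'a::ab_group_add"
  assumes switch: "\<exists>j<r. \<chi> j \<noteq> \<chi> (Suc j)"
    and no_switch: "\<And>j. j < r \<Longrightarrow> \<chi> j = \<chi> (Suc j) \<Longrightarrow> s j = 0"
    and switch_nonzero: "\<And>j. j < r \<Longrightarrow> \<chi> j \<noteq> \<chi> (Suc j) \<Longrightarrow> s j \<noteq> 0"
    and consecutive: "\<And>p q. p < q \<Longrightarrow> q < r \<Longrightarrow> \<chi> p \<noteq> \<chi> (Suc p) \<Longrightarrow> \<chi> q \<noteq> \<chi> (Suc q) \<Longrightarrow>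
      (\<And>m. p < m \<Longrightarrow> m < q \<Longrightarrow> \<chi> m = \<chi> (Suc m)) \<Longrightarrow> s p + s q = 0"
  shows "\<exists>\<mu> \<tau>. \<tau> \<noteq> 0 \<and> (\<forall>j\<le>r. (\<Sum>l<j. s l) = \<mu> + (if \<chi> j then 0 else \<tau>))"
proof -
  define T where "T = {j. j < r \<and> \<chi> j \<noteq> \<chi> (Suc j)}"
  define h where "h j = (if \<chi> j then s j else - s j)" for j
  define \<tau> where "\<tau> = h (Min T)"
  have "finite T" "T \<noteq> {}"
    using switch by (auto simp: T_def)
  \<comment> \<open>consecutive switches go in opposite directions and carry opposite weights\<close>
  have h_const: "h q = \<tau>" if "q \<in> T" for q
    using that
  proof (induction q rule: less_induct)
    case (less q)
    show ?case
    proof (cases "q = Min T")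
      case False
      define E where "E = {p \<in> T. p < q}"
      define p where "p = Max E"
      have "finite E"
        using \<open>finite T\<close> by (simp add: E_def)
      have "Min T \<in> E"
        using False less.prems \<open>finite T\<close> \<open>T \<noteq> {}\<close> by (simp add: E_def order.not_eq_order_implies_strict)
      then have "p \<in> E"
        using Max_in[OF \<open>finite E\<close>] unfolding p_def by blast
      then have p: "p \<in> T" "p < q"
        by (simp_all add: E_def)
      have last: "m \<le> p" if "m \<in> T" "m < q" for m
        using Max_ge[OF \<open>finite E\<close>, of m] that unfolding p_def E_def by blast
      have run: "\<chi> m = \<chi> (Suc m)" if "p < m" "m < q" for m
        using last[of m] that less.prems by (auto simp: T_def)
      have "s p + s q = 0"
        using consecutive[OF p(2) _ _ _ run] p less.prems by (auto simp: T_def)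
      then have "s p = - s q"
        by (simp add: add_eq_0_iff2)
      moreover have "\<chi> q = \<chi> (Suc p)"
        using switch_free_run[of p q \<chi>, OF p(2) run] .
      ultimately have "h q = h p"
        using p(1) less.prems by (auto simp: T_def h_def)
      then show ?thesis
        using less.IH p by simp
    qed (simp add: \<tau>_def)
  qed
  have "\<tau> \<noteq> 0"
    using switch_nonzero Min_in[OF \<open>finite T\<close> \<open>T \<noteq> {}\<close>] by (auto simp: \<tau>_def h_def T_def)
  define g where "g j = (\<Sum>l<j. s l) - (if \<chi> j then 0 else \<tau>)" for j
  have "g (Suc j) = g j" if "j < r" for j
    using no_switch[OF that] h_const[of j] that by (auto simp: g_def h_def T_def)
  then have "g j = g 0" if "j \<le> r" for j
    using that by (induction j) auto
  then have "\<forall>j\<le>r. (\<Sum>l<j. s l) = g 0 + (if \<chi> j then 0 else \<tau>)"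
    by (metis diff_add_cancel g_def)
  with \<open>\<tau> \<noteq> 0\<close> show ?thesis
    by blast
qed

definition odd_frame :: "'a::field fps \<Rightarrow> 'a fps \<Rightarrow> 'a fps mat" where
  "odd_frame u \<beta> = mat2 \<beta> (\<beta> - u) 1 1"

definition even_frame :: "'a::field fps \<Rightarrow> 'a fps \<Rightarrow> bool \<Rightarrow> 'a fps mat" where
  "even_frame u \<beta> c =
     (if c then mat2 (\<beta> div fps_X) (\<beta> - u) 1 fps_X else mat2 \<beta> ((\<beta> - u) div fps_X) fps_X 1)"

definition L_x_diag :: "bool \<Rightarrow> 'a::field fps mat" where
  "L_x_diag c = (if c then mat2 1 0 0 fps_X else mat2 fps_X 0 0 1)"

definition L_y_diag :: "bool \<Rightarrow> 'a::field fps mat" where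
  "L_y_diag c = (if c then mat2 fps_X 0 0 1 else mat2 1 0 0 fps_X)"

lemma Lsum_complement_at:
  assumes "i \<in> A"
  shows "fst (Lsum S (A - S)) i = L_x_diag (i \<in> S)"
    and "snd (Lsum S (A - S)) i = L_y_diag (i \<in> S)"
  using assms by (simp_all add: Lsum_def LS_x_def LS_y_def L_x_diag_def L_y_diag_def)

lemma odd_vertex_intertwines:
  fixes u \<beta> b :: "'a::field fps"
  assumes "fps_X dvd (if c then \<beta> else \<beta> - u)"
  shows "mat2 fps_X b 0 1 * even_frame u \<beta> c = odd_frame u (\<beta> + b) * L_x_diag c"
    and "mat2 1 (- b) 0 fps_X * odd_frame u (\<beta> + b) = even_frame u \<beta> c * L_y_diag c"
  using assms
  by (cases c; simp add: even_frame_def odd_frame_def L_x_diag_def L_y_diag_def mat2_mult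
      mat2_eq_iff algebra_simps dvd_mult_div_cancel del: fps_divide_X)+

lemma even_vertex_intertwines:
  fixes u \<beta> b :: "'a::field fps"
  assumes "fps_X dvd (if c then \<beta> + b else \<beta> + b - u)"
  shows "mat2 1 b 0 fps_X * odd_frame u \<beta> = even_frame u (\<beta> + b) c * L_x_diag (\<not> c)"
    and "mat2 fps_X (- b) 0 1 * even_frame u (\<beta> + b) c = odd_frame u \<beta> * L_y_diag (\<not> c)"
  using assms
  by (cases c; simp add: even_frame_def odd_frame_def L_x_diag_def L_y_diag_def mat2_mult
      mat2_eq_iff algebra_simps dvd_mult_div_cancel del: fps_divide_X)+

lemma odd_frame_inverse:
  fixes u k \<beta> :: "'a::field fps"
  assumes "k * u = 1"
  shows "odd_frame u \<beta> * scaled_adjugate k (odd_frame u \<beta>) = 1\<^sub>m 2 \<and>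
         scaled_adjugate k (odd_frame u \<beta>) * odd_frame u \<beta> = 1\<^sub>m 2"
  using assms unfolding odd_frame_def by (simp add: scaled_adjugate_mat2_inverse)

lemma even_frame_inverse:
  fixes u k \<beta> :: "'a::field fps"
  assumes "k * u = 1" and "fps_X dvd (if c then \<beta> else \<beta> - u)"
  shows "even_frame u \<beta> c * scaled_adjugate k (even_frame u \<beta> c) = 1\<^sub>m 2 \<and>
         scaled_adjugate k (even_frame u \<beta> c) * even_frame u \<beta> c = 1\<^sub>m 2"
  using assms unfolding even_frame_def
  by (cases c) (simp_all add: scaled_adjugate_mat2_inverse algebra_simps dvd_mult_div_cancel del: fps_divide_X)

definition vertex_frame :: "'a::field fps \<Rightarrow> (nat \<Rightarrow> 'a fps) \<Rightarrow> (nat \<Rightarrow> bool) \<Rightarrow> nat \<Rightarrow> 'a fps mat"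
  where "vertex_frame u \<beta> \<chi> i =
    (if odd i then odd_frame u (\<beta> i) else even_frame u (\<beta> i) (\<chi> (i div 2)))"

lemma vertex_frame_intertwines:
  fixes b \<beta> :: "nat \<Rightarrow> complex fps" and u :: "complex fps" and \<chi> :: "nat \<Rightarrow> bool"
  assumes \<beta>_step: "\<And>i. i < 2*r \<Longrightarrow> \<beta> (Suc i) = \<beta> i + b (Suc i)"
    and \<beta>_even: "\<And>i. i \<le> 2*r \<Longrightarrow> even i \<Longrightarrow> fps_X dvd (if \<chi> (i div 2) then \<beta> i else \<beta> i - u)"
    and odd_mem: "\<And>j. j < r \<Longrightarrow> 2*j+1 \<in> S \<longleftrightarrow> \<chi> j"
    and even_mem: "\<And>j. j < r \<Longrightarrow> 2*j+2 \<in> S \<longleftrightarrow> \<not> \<chi> (Suc j)"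
    and i: "i \<in> {1..2*r}"
  shows "fst (MIJ b) i * vertex_frame u \<beta> \<chi> (i - 1) =
           vertex_frame u \<beta> \<chi> i * fst (Lsum S ({1..2*r} - S)) i \<and>
         snd (MIJ b) i * vertex_frame u \<beta> \<chi> i =
           vertex_frame u \<beta> \<chi> (i - 1) * snd (Lsum S ({1..2*r} - S)) i"
proof (cases "odd i")
  case True
  then obtain j where j: "i = 2*j+1"
    by (metis oddE)
  then have "j < r"
    using i by simp
  then show ?thesis
    using j odd_vertex_intertwines[OF \<beta>_even[of "2*j", simplified]] \<beta>_step[of "2*j"] odd_mem[of j]
      Lsum_complement_at[OF i, of S]
    by (simp add: vertex_frame_def MIJ_def)
next
  case False
  obtain j where j: "i = 2*j+2"
  proof
    show "i = 2 * (i div 2 - 1) + 2"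
      using False i by presburger
  qed
  then have "j < r"
    using i by simp
  have \<beta>_i: "\<beta> (2*j+2) = \<beta> (2*j+1) + b (2*j+2)"
    using \<beta>_step[of "2*j+1"] \<open>j < r\<close> by (simp add: add.assoc)
  have "fps_X dvd (if \<chi> (Suc j) then \<beta> (2*j+2) else \<beta> (2*j+2) - u)"
    using \<beta>_even[of "2*j+2"] \<open>j < r\<close> by simp
  then show ?thesis
    unfolding \<beta>_i
    using j even_vertex_intertwines[of "\<chi> (Suc j)" "\<beta> (2*j+1)" "b (2*j+2)" u] \<beta>_i
      even_mem[OF \<open>j < r\<close>] Lsum_complement_at[OF i, of S]
    by (simp add: vertex_frame_def MIJ_def)
qed

lemma MIJ_iso_Lsum_by_frames:
  fixes b \<beta> :: "nat \<Rightarrow> complex fps" and u :: "complex fps" and \<chi> :: "nat \<Rightarrow> bool"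
  assumes "is_unit u"
    and \<beta>_step: "\<And>i. i < 2*r \<Longrightarrow> \<beta> (Suc i) = \<beta> i + b (Suc i)"
    and \<beta>_period: "\<beta> (2*r) = \<beta> 0" and \<chi>_period: "\<chi> r = \<chi> 0"
    and \<beta>_even: "\<And>i. i \<le> 2*r \<Longrightarrow> even i \<Longrightarrow> fps_X dvd (if \<chi> (i div 2) then \<beta> i else \<beta> i - u)"
    and odd_mem: "\<And>j. j < r \<Longrightarrow> 2*j+1 \<in> S \<longleftrightarrow> \<chi> j"
    and even_mem: "\<And>j. j < r \<Longrightarrow> 2*j+2 \<in> S \<longleftrightarrow> \<not> \<chi> (Suc j)"
  shows "rep2_iso (2*r) (MIJ b) (Lsum S ({1..2*r} - S))"
proof -
  obtain k where "k * u = 1"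
    using \<open>is_unit u\<close> by (metis dvdE mult.commute)
  let ?P = "vertex_frame u \<beta> \<chi>" and ?L = "Lsum S ({1..2*r} - S)"
  show ?thesis
  proof (rule rep2_isoI_inverse_frames[where P = ?P and Q = "\<lambda>i. scaled_adjugate k (?P i)"])
    fix i assume i: "i \<in> {1..2*r}"
    show "?P i \<in> carrier_mat 2 2 \<and> scaled_adjugate k (?P i) \<in> carrier_mat 2 2 \<and>
        fst (MIJ b) i \<in> carrier_mat 2 2 \<and> snd (MIJ b) i \<in> carrier_mat 2 2 \<and>
        fst ?L i \<in> carrier_mat 2 2 \<and> snd ?L i \<in> carrier_mat 2 2"
      by (simp add: vertex_frame_def odd_frame_def even_frame_def scaled_adjugate_def MIJ_def Lsum_def)
    show "?P i * scaled_adjugate k (?P i) = 1\<^sub>m 2 \<and> scaled_adjugate k (?P i) * ?P i = 1\<^sub>m 2"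
      using \<beta>_even[of i] i odd_frame_inverse[OF \<open>k * u = 1\<close>] even_frame_inverse[OF \<open>k * u = 1\<close>]
      by (simp add: vertex_frame_def)
    have "?P (prev_vertex (2*r) i) = ?P (i - 1)"
      using \<beta>_period \<chi>_period by (simp add: prev_vertex_def vertex_frame_def)
    then show "fst (MIJ b) i * ?P (prev_vertex (2*r) i) = ?P i * fst ?L i"
      and "snd (MIJ b) i * ?P i = ?P (prev_vertex (2*r) i) * snd ?L i"
      using vertex_frame_intertwines[OF \<beta>_step \<beta>_even odd_mem even_mem i] by simp_all
  qed
qed

lemma peak_in_switches:
  assumes X': "X' \<subseteq> {p. even p \<and> p < 2*r}" and "X' \<noteq> {}" and "card X' < r"
  shows "\<exists>j<r. peak_in r X' j \<noteq> peak_in r X' (Suc j)"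
proof (rule ccontr)
  assume "\<not> ?thesis"
  then have const: "peak_in r X' j = peak_in r X' 0" if "j < r" for j
    using that by (induction j) auto
  have peak_iff: "peak_in r X' j \<longleftrightarrow> 2*j \<in> X'" if "j < r" for j
    using that by (simp add: peak_in_def)
  have X'_eq: "X' = (\<lambda>j. 2*j) ` {j. j < r \<and> peak_in r X' j}"
  proof
    show "X' \<subseteq> (\<lambda>j. 2*j) ` {j. j < r \<and> peak_in r X' j}"
    proof
      fix p assume "p \<in> X'"
      then have "p = 2 * (p div 2)" "p div 2 < r"
        using X' by auto
      with \<open>p \<in> X'\<close> show "p \<in> (\<lambda>j. 2*j) ` {j. j < r \<and> peak_in r X' j}"
        using peak_iff by (metis (mono_tags, lifting) image_eqI mem_Collect_eq)
    qed
  qed (use peak_iff in auto)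
  show False
  proof (cases "peak_in r X' 0")
    case True
    then have "{j. j < r \<and> peak_in r X' j} = {..<r}"
      using const by auto
    then have "X' = (\<lambda>j. 2*j) ` {..<r}"
      using X'_eq by metis
    then have "card X' = r"
      by (simp add: card_image inj_on_def)
    with \<open>card X' < r\<close> show False
      by simp
  next
    case False
    then have "X' = {}"
      using X'_eq const by auto
    with \<open>X' \<noteq> {}\<close> show False ..
  qed
qed

lemma odd_mem_assocX: "j < r \<Longrightarrow> 2*j+1 \<in> assocX r X' \<longleftrightarrow> peak_in r X' j"
  unfolding assocX_def by auto presburger+

lemma even_mem_assocX: "j < r \<Longrightarrow> 2*j+2 \<in> assocX r X' \<longleftrightarrow> \<not> peak_in r X' (Suc j)"
  unfolding assocX_def by auto presburger+

lemma cyc_consecutive_odd: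
  assumes "Os \<subseteq> {i. odd i}" and "2*p+1 \<in> Os" "2*q+1 \<in> Os" "p < q"
    and gap: "\<And>m. p < m \<Longrightarrow> m < q \<Longrightarrow> 2*m+1 \<notin> Os"
  shows "cyc_consecutive Os (2*p+1) (2*q+1)"
proof -
  have "\<not> (\<exists>m\<in>Os. 2*p+1 < m \<and> m < 2*q+1)"
  proof
    assume "\<exists>m\<in>Os. 2*p+1 < m \<and> m < 2*q+1"
    then obtain m where "2*m+1 \<in> Os" "2*p+1 < 2*m+1" "2*m+1 < 2*q+1"
      using \<open>Os \<subseteq> {i. odd i}\<close> by (auto elim!: oddE)
    then show False
      using gap by simp
  qed
  then show ?thesis
    using assms by (simp add: cyc_consecutive_def)
qed

lemma peak_switch_partial_sums:
  fixes b :: "nat \<Rightarrow> complex fps"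
  assumes X': "X' \<subseteq> {p. even p \<and> p < 2*r}" and "X' \<noteq> {}" and "card X' < r"
    and same: "\<forall>j<r. (peak_in r X' j \<longleftrightarrow> peak_in r X' (j+1))
                 \<longrightarrow> fps_X dvd (b (2*j+1) + b (2*j+2))"
    and differ: "\<forall>j<r. (peak_in r X' j \<noteq> peak_in r X' (j+1))
                 \<longrightarrow> \<not> fps_X dvd (b (2*j+1) + b (2*j+2))"
    and consecutive: "\<forall>p q. cyc_consecutive {i \<in> {1..2*r}. odd i \<and> \<not> fps_X dvd (b i + b (i+1))} p q
                 \<longrightarrow> fps_X dvd (b p + b (p+1) + b q + b (q+1))"
  shows "\<exists>\<mu> \<tau>. \<tau> \<noteq> 0 \<and>
    (\<forall>j\<le>r. fps_nth (\<Sum>i=1..2*j. b i) 0 = \<mu> + (if peak_in r X' j then 0 else \<tau>))"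
proof -
  define s where "s j = fps_nth (b (2*j+1) + b (2*j+2)) 0" for j
  have "\<exists>\<mu> \<tau>. \<tau> \<noteq> 0 \<and> (\<forall>j\<le>r. (\<Sum>l<j. s l) = \<mu> + (if peak_in r X' j then 0 else \<tau>))"
  proof (rule partial_sums_of_switch_weights)
    show "\<exists>j<r. peak_in r X' j \<noteq> peak_in r X' (Suc j)"
      using peak_in_switches[OF X' \<open>X' \<noteq> {}\<close> \<open>card X' < r\<close>] .
    show "s j = 0" if "j < r" "peak_in r X' j = peak_in r X' (Suc j)" for j
      using same that by (simp add: s_def fps_X_dvd_iff)
    show "s j \<noteq> 0" if "j < r" "peak_in r X' j \<noteq> peak_in r X' (Suc j)" for j
      using differ that by (simp add: s_def fps_X_dvd_iff)
    show "s p + s q = 0"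
      if "p < q" "q < r" "peak_in r X' p \<noteq> peak_in r X' (Suc p)"
        "peak_in r X' q \<noteq> peak_in r X' (Suc q)"
        and gap: "\<And>m. p < m \<Longrightarrow> m < q \<Longrightarrow> peak_in r X' m = peak_in r X' (Suc m)" for p q
    proof -
      let ?Os = "{i \<in> {1..2*r}. odd i \<and> \<not> fps_X dvd (b i + b (i+1))}"
      have "cyc_consecutive ?Os (2*p+1) (2*q+1)"
      proof (rule cyc_consecutive_odd)
        show "2*p+1 \<in> ?Os" "2*q+1 \<in> ?Os"
          using differ that by (auto simp: add.assoc)
        show "2*m+1 \<notin> ?Os" if "p < m" "m < q" for m
          using same gap[OF that] that \<open>q < r\<close> by (simp add: add.assoc)
      qed (use \<open>p < q\<close> in auto)
      then show ?thesis
        using consecutive by (simp add: s_def fps_X_dvd_iff add.assoc)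
    qed
  qed
  moreover have "fps_nth (\<Sum>i=1..2*j. b i) 0 = (\<Sum>l<j. s l)" for j
    unfolding sum_in_pairs s_def by (simp add: fps_sum_nth)
  ultimately show ?thesis
    by presburger
qed

theorem theorem3p7:
  fixes r :: nat and b :: "nat \<Rightarrow> complex fps" and X' :: "nat set"
  assumes "r \<ge> 2"
    and "(\<Sum>i=1..2*r. b i) = 0"
    and "X' \<subseteq> {p. even p \<and> p < 2*r}"
    and "1 \<le> card X'" and "card X' < r"
    and "\<forall>j<r. (peak_in r X' j \<longleftrightarrow> peak_in r X' (j+1))
                 \<longrightarrow> fps_X dvd (b (2*j+1) + b (2*j+2))"
    and "\<forall>j<r. (peak_in r X' j \<noteq> peak_in r X' (j+1))
                 \<longrightarrow> \<not> fps_X dvd (b (2*j+1) + b (2*j+2))"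
    and "\<forall>p q. cyc_consecutive {i \<in> {1..2*r}. odd i \<and> \<not> fps_X dvd (b i + b (i+1))} p q
                 \<longrightarrow> fps_X dvd (b p + b (p+1) + b q + b (q+1))"
  shows "rep2_iso (2*r) (MIJ b) (Lsum (assocX r X') (assocY r X'))"
proof -
  have "X' \<noteq> {}"
    using assms(4) by auto
  then obtain \<mu> \<tau> where "\<tau> \<noteq> 0" and sums:
      "\<forall>j\<le>r. fps_nth (\<Sum>i=1..2*j. b i) 0 = \<mu> + (if peak_in r X' j then 0 else \<tau>)"
    using peak_switch_partial_sums[OF assms(3) _ assms(5-8)] by blast
  define \<beta> where "\<beta> i = (\<Sum>l=1..i. b l) - fps_const \<mu>" for i
  show ?thesis
    unfolding assocY_def
  proof (rule MIJ_iso_Lsum_by_frames[where \<beta> = \<beta> and u = "fps_const \<tau>" and \<chi> = "peak_in r X'"])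
    show "is_unit (fps_const \<tau>)"
      using \<open>\<tau> \<noteq> 0\<close> by simp
    show "\<beta> (Suc i) = \<beta> i + b (Suc i)" for i
      by (simp add: \<beta>_def)
    show "\<beta> (2*r) = \<beta> 0"
      using assms(2) by (simp add: \<beta>_def)
    show "peak_in r X' r = peak_in r X' 0"
      by (simp add: peak_in_def)
    show "fps_X dvd (if peak_in r X' (i div 2) then \<beta> i else \<beta> i - fps_const \<tau>)"
      if "i \<le> 2*r" "even i" for i
      using sums that by (auto simp: \<beta>_def fps_X_dvd_iff elim!: evenE)
  qed (use odd_mem_assocX even_mem_assocX in blast)+
qed

end
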